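(* Let $n>s\ge1$ be integers and ${\bm v}=(v_0,\dots,v_s)\in\mathbb{R}^{s+1}$. Let $f_{\bm v}(t;x)=x^n+t\sum_{k=0}^sv_kx^k$, $P_{\bm v}(t)=\det M_n(f_{\bm v}(t;x),f'_{\bm v}(t;x))\in\mathbb{R}[t]$ (derivative in $x$), assumed not identically zero, and $\alpha_{\bm v}=\max\{\alpha\in\mathbb{R}\mid P_{\bm v}(\alpha)=0\}$. Suppose there exist an integer $\gamma_0$ and a real $\rho_0>\alpha_{\bm v}$ such that $N_{f_{\bm v}(\xi;x)}=\gamma_0$ for all $\xi>\rho_0$. Then $N_{f_{\bm v}(\xi;x)}=\gamma_0$ for all $\xi>\alpha_{\bm v}$.
   Context: Bezoutian: for polynomials $f_1,f_2$ over a field $F$ of characteristic $0$ and an integer $n\ge\max\{\deg f_1,\deg f_2\}$, write $\frac{f_1(x)f_2(y)-f_1(y)f_2(x)}{x-y}=\sum_{i,j=1}^n\alpha_{ij}x^{n-i}y^{n-j}\in F[x,y]$ and set $M_n(f_1,f_2)=(\alpha_{ij})_{1\le i,j\le n}$. $N_h$ is the number of distinct real roots of a real polynomial $h$. Note $P_{\bm v}(0)=0$ since $f_{\bm v}(0;x)=x^n$. *)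

theory Defs
  imports "Jordan_Normal_Form.Determinant" "HOL-Computational_Algebra.Polynomial"
begin

text \<open>Bivariate polynomials in x,y are represented as elements of 'a poly poly:
  the outer variable is x, the inner variable (coefficients) is y.\<close>

definition lift_x :: "'a::comm_ring_1 poly \<Rightarrow> 'a poly poly" where
  "lift_x f = map_poly (\<lambda>c. [:c:]) f"

definition lift_y :: "'a::comm_ring_1 poly \<Rightarrow> 'a poly poly" where
  "lift_y f = [:f:]"

text \<open>The quotient (f1(x) f2(y) - f1(y) f2(x)) / (x - y) in F[x,y] (exact division).\<close>
definition bezout_quot :: "'a::idom_divide poly \<Rightarrow> 'a poly \<Rightarrow> 'a poly poly" where
  "bezout_quot f1 f2 =
     (lift_x f1 * lift_y f2 - lift_y f1 * lift_x f2) div [: - [:0, 1:], 1 :]"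

text \<open>alpha_ij for 1 <= i,j <= n is the coefficient of x^(n-i) y^(n-j);
  the matrix is stored 0-indexed, entry (i,j) corresponding to alpha_(i+1)(j+1).\<close>
definition bezout_mat :: "nat \<Rightarrow> 'a::idom_divide poly \<Rightarrow> 'a poly \<Rightarrow> 'a mat" where
  "bezout_mat n f1 f2 =
     mat n n (\<lambda>(i, j). coeff (coeff (bezout_quot f1 f2) (n - (i + 1))) (n - (j + 1)))"

text \<open>f_v(t;x) = x^n + t * sum_{k=0}^s v_k x^k, as a polynomial in x with coefficients in R[t].\<close>
definition f_v :: "nat \<Rightarrow> nat \<Rightarrow> (nat \<Rightarrow> real) \<Rightarrow> real poly poly" where
  "f_v n s v = monom 1 n + smult [:0, 1:] (\<Sum>k\<le>s. monom [:v k:] k)"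

definition f_v_at :: "nat \<Rightarrow> nat \<Rightarrow> (nat \<Rightarrow> real) \<Rightarrow> real \<Rightarrow> real poly" where
  "f_v_at n s v \<xi> = map_poly (\<lambda>c. poly c \<xi>) (f_v n s v)"

definition P_v :: "nat \<Rightarrow> nat \<Rightarrow> (nat \<Rightarrow> real) \<Rightarrow> real poly" where
  "P_v n s v = det (bezout_mat n (f_v n s v) (pderiv (f_v n s v)))"

definition alpha_v :: "nat \<Rightarrow> nat \<Rightarrow> (nat \<Rightarrow> real) \<Rightarrow> real" where
  "alpha_v n s v = Max {\<alpha>. poly (P_v n s v) \<alpha> = 0}"

definition num_real_roots :: "real poly \<Rightarrow> nat" where
  "num_real_roots h = card {x. poly h x = 0}"

end

theory Submission
  imports Defs "Jordan_Normal_Form.Char_Poly" "HOL-Analysis.Elementary_Metric_Spaces"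
begin

text \<open>For \<open>\<xi> > \<alpha>\<^sub>v\<close> every real root of \<open>f\<^sub>v(\<xi>;x)\<close> is simple: a common root of
  \<open>f\<^sub>v(\<xi>;x)\<close> and \<open>f\<^sub>v'(\<xi>;x)\<close> gives a null vector of the Bezout matrix, so \<open>P\<^sub>v(\<xi>) = 0\<close>.
  Along the pencil \<open>x^n + \<xi> g(x)\<close> with \<open>deg g < n\<close>, a member all of whose real roots are simple
  keeps its number of real roots under small perturbations of \<open>\<xi>\<close>: each root moves inside a
  small isolating interval, and no root can appear elsewhere. Hence the root count is locally
  constant, and therefore constant, on the connected set \<open>(\<alpha>\<^sub>v, \<infinity>)\<close>.\<close>

lemma poly_lift_x_const: "poly (lift_x f) [:c:] = [:poly f c:]"
  unfolding lift_x_def by (induction f rule: pCons_induct) (auto simp: map_poly_pCons)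

lemma poly_lift_x_var: "poly (lift_x f) [:0, 1:] = f"
  unfolding lift_x_def by (induction f rule: pCons_induct) (auto simp: map_poly_pCons)

lemma bezout_quot_mult:
  fixes f1 f2 :: "'a::idom_divide poly"
  shows "bezout_quot f1 f2 * [:- [:0, 1:], 1:] = lift_x f1 * lift_y f2 - lift_y f1 * lift_x f2"
proof -
  have "poly (lift_x f1 * lift_y f2 - lift_y f1 * lift_x f2) [:0, 1:] = 0"
    by (simp add: poly_lift_x_var lift_y_def)
  then show ?thesis
    unfolding bezout_quot_def poly_eq_0_iff_dvd by (rule dvd_div_mult_self)
qed

lemma degree_bezout_quot_less:
  fixes f1 f2 :: "'a::idom_divide poly"
  assumes "0 < n" and "degree f1 \<le> n" and "degree f2 \<le> n"
  shows "degree (bezout_quot f1 f2) < n"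
proof (cases "bezout_quot f1 f2 = 0")
  case False
  then have "degree (bezout_quot f1 f2) + 1 = degree (lift_x f1 * lift_y f2 - lift_y f1 * lift_x f2)"
    unfolding bezout_quot_mult[symmetric] by (subst degree_mult_eq) auto
  also have "\<dots> \<le> n"
    using assms degree_map_poly_le[of "\<lambda>c. [:c:]" f1] degree_map_poly_le[of "\<lambda>c. [:c:]" f2]
    unfolding lift_x_def lift_y_def
    by (intro degree_diff_le order.trans[OF degree_mult_le]) auto
  finally show ?thesis by simp
qed (use assms in simp)

lemma map_poly_bezout_quot:
  fixes h :: "'a::idom_divide \<Rightarrow> 'b::idom_divide"
  assumes "comm_ring_hom h"
  shows "map_poly (map_poly h) (bezout_quot f1 f2) = bezout_quot (map_poly h f1) (map_poly h f2)"
proof -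
  interpret h: comm_ring_hom h by fact
  interpret ph: map_poly_comm_ring_hom h ..
  interpret pph: map_poly_comm_ring_hom "map_poly h" ..
  have "map_poly h [:c:] = [:h c:]" for c
    by (cases "c = 0") (simp_all add: map_poly_pCons)
  then have lift_x: "map_poly (map_poly h) (lift_x f) = lift_x (map_poly h f)" for f
    unfolding lift_x_def by (simp add: map_poly_map_poly o_def)
  have "map_poly (map_poly h) [:f:] = [:map_poly h f:]" for f
    by (cases "f = 0") (simp_all add: map_poly_pCons)
  then have lift_y: "map_poly (map_poly h) (lift_y f) = lift_y (map_poly h f)" for f
    unfolding lift_y_def by simp
  have D: "map_poly (map_poly h) [:- [:0, 1:], 1:] = [:- [:0, 1:], 1:]"
    by (simp add: hom_distribs)
  have "map_poly (map_poly h) (bezout_quot f1 f2) * [:- [:0, 1:], 1:]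
      = map_poly (map_poly h) (lift_x f1 * lift_y f2 - lift_y f1 * lift_x f2)"
    unfolding bezout_quot_mult[symmetric] pph.hom_mult D ..
  also have "\<dots> = lift_x (map_poly h f1) * lift_y (map_poly h f2)
      - lift_y (map_poly h f1) * lift_x (map_poly h f2)"
    by (simp add: hom_distribs lift_x lift_y)
  also have "\<dots> = bezout_quot (map_poly h f1) (map_poly h f2) * [:- [:0, 1:], 1:]"
    by (rule bezout_quot_mult[symmetric])
  finally show ?thesis
    by (rule mult_right_cancel[THEN iffD1, rotated]) simp
qed

lemma map_mat_bezout_mat:
  fixes h :: "'a::idom_divide \<Rightarrow> 'b::idom_divide"
  assumes "comm_ring_hom h"
  shows "map_mat h (bezout_mat n f1 f2) = bezout_mat n (map_poly h f1) (map_poly h f2)"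
proof -
  interpret h: comm_ring_hom h by fact
  show ?thesis
    unfolding bezout_mat_def map_poly_bezout_quot[OF assms, symmetric]
    by (rule eq_matI) (auto simp: coeff_map_poly)
qed

lemma poly_eq_sum_lessThan:
  fixes p :: "'a::comm_semiring_1 poly"
  assumes "degree p < n"
  shows "poly p x = (\<Sum>i<n. coeff p i * x ^ i)"
proof -
  have "poly p x = (\<Sum>i\<le>degree p. coeff p i * x ^ i)" by (simp add: poly_altdef)
  also have "\<dots> = (\<Sum>i<n. coeff p i * x ^ i)"
    by (rule sum.mono_neutral_left) (use assms in \<open>auto intro: le_degree\<close>)
  finally show ?thesis .
qed

text \<open>At a common root \<open>r\<close> the Bezoutian vanishes identically in \<open>y\<close> after substituting
  \<open>x := r\<close>, so \<open>(r^(n-1), \<dots>, r, 1)\<close> is a left null vector of the Bezout matrix.\<close>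

lemma det_bezout_mat_common_root:
  fixes f1 f2 :: "'a::field poly"
  assumes "0 < n" and "degree f1 \<le> n" and "degree f2 \<le> n"
    and "poly f1 r = 0" and "poly f2 r = 0"
  shows "det (bezout_mat n f1 f2) = 0"
proof -
  define B where "B = bezout_quot f1 f2"
  have "poly B [:r:] * poly [:- [:0, 1:], 1:] [:r:]
      = poly (lift_x f1 * lift_y f2 - lift_y f1 * lift_x f2) [:r:]"
    unfolding B_def bezout_quot_mult[symmetric] by (rule poly_mult[symmetric])
  also have "\<dots> = 0" using assms(4,5) by (simp add: poly_lift_x_const lift_y_def)
  finally have "poly B [:r:] * poly [:- [:0, 1:], 1:] [:r:] = 0" .
  moreover have "poly [:- [:0, 1:], 1:] [:r:] \<noteq> 0"
  proof
    assume "poly [:- [:0, 1:], 1:] [:r:] = 0"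
    then have "coeff (poly [:- [:0, 1:], 1:] [:r:]) 1 = 0" by simp
    then show False by simp
  qed
  ultimately have B_at_r: "poly B [:r:] = 0" by (metis mult_eq_0_iff)
  define M where "M = bezout_mat n f1 f2"
  define w :: "'a vec" where "w = vec n (\<lambda>i. r ^ (n - Suc i))"
  have M: "M \<in> carrier_mat n n" unfolding M_def bezout_mat_def by simp
  have "transpose_mat M *\<^sub>v w = 0\<^sub>v n"
  proof (rule eq_vecI)
    fix j assume "j < dim_vec (0\<^sub>v n :: 'a vec)"
    then have j: "j < n" by simp
    have "(transpose_mat M *\<^sub>v w) $ j
        = (\<Sum>i<n. coeff (coeff B (n - Suc i)) (n - Suc j) * r ^ (n - Suc i))"
      using j unfolding M_def bezout_mat_def w_def B_def
      by (simp add: mult_mat_vec_def scalar_prod_def atLeast0LessThan)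
    also have "\<dots> = (\<Sum>m<n. coeff (coeff B m) (n - Suc j) * r ^ m)"
      by (rule sum.nat_diff_reindex)
    also have "\<dots> = coeff (poly B [:r:]) (n - Suc j)"
      unfolding poly_eq_sum_lessThan[OF degree_bezout_quot_less[OF assms(1-3)], folded B_def]
      by (simp add: coeff_sum poly_const_pow mult.commute)
    finally show "(transpose_mat M *\<^sub>v w) $ j = 0\<^sub>v n $ j"
      using j B_at_r by simp
  qed (use M in simp)
  moreover have "w \<noteq> 0\<^sub>v n"
  proof
    assume "w = 0\<^sub>v n"
    then have "w $ (n - 1) = 0" using assms(1) by simp
    then show False unfolding w_def using assms(1) by simp
  qed
  moreover have "w \<in> carrier_vec n" unfolding w_def by simp
  ultimately have "det (transpose_mat M) = 0"
    using det_0_iff_vec_prod_zero_field[of "transpose_mat M" n] M by auto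
  then show ?thesis using det_transpose[OF M] unfolding M_def by simp
qed

lemma sgn_eq_if_abs_diff_less:
  fixes a b :: real
  assumes "\<bar>a - b\<bar> < \<bar>b\<bar>"
  shows "sgn a = sgn b"
  using assms by (auto simp: sgn_real_def split: if_splits)

lemma eventually_sgn_poly_pencil_eq:
  fixes p q :: "real poly" and C :: "real set"
  assumes "compact C" and nonzero: "\<forall>x\<in>C. poly (p + smult \<xi>\<^sub>0 q) x \<noteq> 0"
  shows "\<forall>\<^sub>F \<xi> in nhds \<xi>\<^sub>0. \<forall>x\<in>C. sgn (poly (p + smult \<xi> q) x) = sgn (poly (p + smult \<xi>\<^sub>0 q) x)"
proof (cases "C = {}")
  case False
  have "continuous_on C (\<lambda>x. \<bar>poly (p + smult \<xi>\<^sub>0 q) x\<bar>)"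
    by (intro continuous_intros)
  then obtain z where "z \<in> C"
    and z: "\<forall>x\<in>C. \<bar>poly (p + smult \<xi>\<^sub>0 q) z\<bar> \<le> \<bar>poly (p + smult \<xi>\<^sub>0 q) x\<bar>"
    using continuous_attains_inf[OF assms(1) False] by blast
  define m where "m = \<bar>poly (p + smult \<xi>\<^sub>0 q) z\<bar>"
  have "m > 0" unfolding m_def using nonzero \<open>z \<in> C\<close> by simp
  have "continuous_on C (\<lambda>x. \<bar>poly q x\<bar>)"
    by (intro continuous_intros)
  then obtain y where y: "\<forall>x\<in>C. \<bar>poly q x\<bar> \<le> \<bar>poly q y\<bar>"
    using continuous_attains_sup[OF assms(1) False] by blast
  define M where "M = \<bar>poly q y\<bar> + 1"
  have "M > 0" and M: "\<forall>x\<in>C. \<bar>poly q x\<bar> \<le> M"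
    unfolding M_def using y by force+
  show ?thesis
    unfolding eventually_nhds_metric
  proof (intro exI[of _ "m / M"] conjI allI impI ballI)
    show "m / M > 0" using \<open>m > 0\<close> \<open>M > 0\<close> by simp
    fix \<xi> x assume "dist \<xi> \<xi>\<^sub>0 < m / M" and "x \<in> C"
    have "\<bar>poly (p + smult \<xi> q) x - poly (p + smult \<xi>\<^sub>0 q) x\<bar> = \<bar>\<xi> - \<xi>\<^sub>0\<bar> * \<bar>poly q x\<bar>"
      by (simp add: algebra_simps abs_mult[symmetric])
    also have "\<dots> \<le> \<bar>\<xi> - \<xi>\<^sub>0\<bar> * M" using M \<open>x \<in> C\<close> by (simp add: mult_left_mono)
    also have "\<dots> < m"
      using \<open>dist \<xi> \<xi>\<^sub>0 < m / M\<close> \<open>M > 0\<close> by (simp add: dist_real_def pos_less_divide_eq)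
    also have "\<dots> \<le> \<bar>poly (p + smult \<xi>\<^sub>0 q) x\<bar>" unfolding m_def using z \<open>x \<in> C\<close> by blast
    finally show "sgn (poly (p + smult \<xi> q) x) = sgn (poly (p + smult \<xi>\<^sub>0 q) x)"
      by (rule sgn_eq_if_abs_diff_less)
  qed
qed simp

lemma abs_poly_le_coeff_sum:
  fixes g :: "real poly"
  assumes "1 \<le> \<bar>x\<bar>"
  shows "\<bar>poly g x\<bar> \<le> (\<Sum>i\<le>degree g. \<bar>coeff g i\<bar>) * \<bar>x\<bar> ^ degree g"
proof -
  have "\<bar>poly g x\<bar> \<le> (\<Sum>i\<le>degree g. \<bar>coeff g i\<bar> * \<bar>x\<bar> ^ i)"
    unfolding poly_altdef by (rule order_trans[OF sum_abs]) (simp add: abs_mult power_abs)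
  also have "\<dots> \<le> (\<Sum>i\<le>degree g. \<bar>coeff g i\<bar> * \<bar>x\<bar> ^ degree g)"
    by (intro sum_mono mult_left_mono power_increasing assms) auto
  finally show ?thesis by (simp add: sum_distrib_right)
qed

lemma monic_pencil_roots_bounded:
  fixes g :: "real poly"
  assumes "degree g < n"
  obtains R where "\<And>\<xi> x. \<bar>\<xi>\<bar> \<le> B \<Longrightarrow> R \<le> \<bar>x\<bar> \<Longrightarrow> poly (monom 1 n + smult \<xi> g) x \<noteq> 0"
proof -
  define C where "C = (\<Sum>i\<le>degree g. \<bar>coeff g i\<bar>)"
  have "C \<ge> 0" unfolding C_def by (simp add: sum_nonneg)
  have "poly (monom 1 n + smult \<xi> g) x \<noteq> 0" if \<xi>: "\<bar>\<xi>\<bar> \<le> B" and x: "\<bar>B\<bar> * C + 1 \<le> \<bar>x\<bar>" for \<xi> x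
  proof -
    have x1: "1 \<le> \<bar>x\<bar>" using x \<open>C \<ge> 0\<close> by (smt (verit) mult_nonneg_nonneg abs_ge_zero)
    have "\<bar>\<xi> * poly g x\<bar> \<le> \<bar>B\<bar> * (C * \<bar>x\<bar> ^ degree g)"
      unfolding abs_mult C_def using \<xi> abs_poly_le_coeff_sum[OF x1, of g]
      by (intro mult_mono) auto
    also have "\<dots> < \<bar>x\<bar> * \<bar>x\<bar> ^ degree g"
      using x x1 by (simp add: mult.assoc[symmetric] mult_strict_right_mono)
    also have "\<dots> \<le> \<bar>x\<bar> ^ n"
      using power_increasing[OF Suc_leI[OF assms] x1] by simp
    finally have "\<bar>\<xi> * poly g x\<bar> < \<bar>x ^ n\<bar>" by (simp add: power_abs)
    then show ?thesis by (auto simp: poly_monom add_eq_0_iff2)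
  qed
  then show ?thesis by (rule that)
qed

text \<open>Writing \<open>p = (x - x\<^sub>0) r\<close> with \<open>r(x\<^sub>0) = p'(x\<^sub>0) \<noteq> 0\<close>, the product
  \<open>p(x\<^sub>0 - \<delta>) p(x\<^sub>0 + \<delta>) = -\<delta>\<^sup>2 r(x\<^sub>0 - \<delta>) r(x\<^sub>0 + \<delta>)\<close> is negative for small \<open>\<delta>\<close>.\<close>

lemma simple_root_sign_change:
  fixes p :: "real poly"
  assumes "poly p x\<^sub>0 = 0" and "poly (pderiv p) x\<^sub>0 \<noteq> 0"
  shows "\<forall>\<^sub>F \<delta> in at_right 0. poly p (x\<^sub>0 - \<delta>) * poly p (x\<^sub>0 + \<delta>) < 0"
proof -
  obtain r where p: "p = [:- x\<^sub>0, 1:] * r"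
    using assms(1) unfolding poly_eq_0_iff_dvd by (auto elim: dvdE)
  have "poly (pderiv p) x\<^sub>0 = poly r x\<^sub>0"
    unfolding p pderiv_mult by (simp add: pderiv_pCons)
  then have "poly r x\<^sub>0 * poly r x\<^sub>0 > 0" using assms(2) not_real_square_gt_zero by metis
  moreover have "((\<lambda>\<delta>. poly r (x\<^sub>0 - \<delta>) * poly r (x\<^sub>0 + \<delta>)) \<longlongrightarrow> poly r x\<^sub>0 * poly r x\<^sub>0) (at_right 0)"
    by (intro tendsto_intros tendsto_eq_intros) auto
  ultimately have "\<forall>\<^sub>F \<delta> in at_right 0. poly r (x\<^sub>0 - \<delta>) * poly r (x\<^sub>0 + \<delta>) > 0"
    by (intro order_tendstoD(1))
  with eventually_at_right_less[of 0]
  show ?thesis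
  proof eventually_elim
    case (elim \<delta>)
    have "poly p (x\<^sub>0 - \<delta>) * poly p (x\<^sub>0 + \<delta>) = - (\<delta> * \<delta> * (poly r (x\<^sub>0 - \<delta>) * poly r (x\<^sub>0 + \<delta>)))"
      unfolding p by (simp add: algebra_simps)
    moreover have "0 < \<delta> * \<delta> * (poly r (x\<^sub>0 - \<delta>) * poly r (x\<^sub>0 + \<delta>))"
      using elim by (metis mult_pos_pos)
    ultimately show ?case by linarith
  qed
qed

lemma poly_ex1_root_between:
  fixes p :: "real poly"
  assumes "a < b" and "poly p a * poly p b < 0" and "\<forall>x\<in>{a..b}. poly (pderiv p) x \<noteq> 0"
  shows "\<exists>!x. poly p x = 0 \<and> x \<in> {a<..<b}"
proof (rule ex_ex1I)
  show "\<exists>x. poly p x = 0 \<and> x \<in> {a<..<b}" using poly_IVT[OF assms(1,2)] by auto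
next
  have no_two: False
    if uw: "u < w" "u \<in> {a<..<b}" "w \<in> {a<..<b}" "poly p u = 0" "poly p w = 0" for u w
  proof -
    obtain z where "u < z" "z < w" and "poly p w - poly p u = (w - u) * poly (pderiv p) z"
      using poly_MVT[OF uw(1)] by blast
    then have "poly (pderiv p) z = 0" using uw by simp
    moreover have "z \<in> {a..b}" using \<open>u < z\<close> \<open>z < w\<close> uw(2,3) by auto
    ultimately show False using assms(3) by blast
  qed
  show "x = y" if "poly p x = 0 \<and> x \<in> {a<..<b}" "poly p y = 0 \<and> y \<in> {a<..<b}" for x y
    using no_two[of x y] no_two[of y x] that by (cases x y rule: linorder_cases) auto
qed

lemma simple_roots_isolating_radius:
  fixes p :: "real poly"
  assumes "p \<noteq> 0" and simple: "\<And>x. poly p x = 0 \<Longrightarrow> poly (pderiv p) x \<noteq> 0"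
  obtains \<delta> where "\<delta> > 0"
    and "\<And>x y. poly p x = 0 \<Longrightarrow> poly p y = 0 \<Longrightarrow> x \<noteq> y \<Longrightarrow> 2 * \<delta> < \<bar>y - x\<bar>"
    and "\<And>x. poly p x = 0 \<Longrightarrow> poly p (x - \<delta>) * poly p (x + \<delta>) < 0"
    and "\<And>x z. poly p x = 0 \<Longrightarrow> z \<in> {x - \<delta>..x + \<delta>} \<Longrightarrow> poly (pderiv p) z \<noteq> 0"
proof -
  define K where "K = {x. poly p x = 0}"
  have "finite K" unfolding K_def using poly_roots_finite[OF assms(1)] .
  have "\<forall>\<^sub>F \<delta> in at_right 0. \<forall>x\<in>K. (\<forall>y\<in>K. x \<noteq> y \<longrightarrow> 2 * \<delta> < \<bar>y - x\<bar>)
      \<and> poly p (x - \<delta>) * poly p (x + \<delta>) < 0 \<and> (\<forall>z\<in>{x - \<delta>..x + \<delta>}. poly (pderiv p) z \<noteq> 0)"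
  proof (rule eventually_ball_finite[OF \<open>finite K\<close>], intro ballI eventually_conj)
    fix x assume "x \<in> K"
    then have root: "poly p x = 0" and simple_x: "poly (pderiv p) x \<noteq> 0"
      using simple unfolding K_def by auto
    show "\<forall>\<^sub>F \<delta> in at_right 0. \<forall>y\<in>K. x \<noteq> y \<longrightarrow> 2 * \<delta> < \<bar>y - x\<bar>"
    proof (rule eventually_ball_finite[OF \<open>finite K\<close>], intro ballI)
      fix y
      show "\<forall>\<^sub>F \<delta> in at_right 0. x \<noteq> y \<longrightarrow> 2 * \<delta> < \<bar>y - x\<bar>"
      proof (cases "x = y")
        case False
        then show ?thesis
          unfolding eventually_at_right_field by (auto intro!: exI[of _ "\<bar>y - x\<bar> / 2"])
      qed simp
    qed
    show "\<forall>\<^sub>F \<delta> in at_right 0. poly p (x - \<delta>) * poly p (x + \<delta>) < 0"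
      using root simple_x by (rule simple_root_sign_change)
    obtain e where "e > 0" and e: "\<And>z. dist x z < e \<Longrightarrow> poly (pderiv p) z \<noteq> 0"
      using continuous_at_avoid[of x "poly (pderiv p)" 0] simple_x by auto
    show "\<forall>\<^sub>F \<delta> in at_right 0. \<forall>z\<in>{x - \<delta>..x + \<delta>}. poly (pderiv p) z \<noteq> 0"
      unfolding eventually_at_right_field
    proof (intro exI[of _ e] conjI allI impI ballI)
      fix \<delta> z assume "\<delta> < e" and "z \<in> {x - \<delta>..x + \<delta>}"
      then have "dist x z < e" by (auto simp: dist_real_def abs_if)
      then show "poly (pderiv p) z \<noteq> 0" by (rule e)
    qed fact
  qed
  then obtain b where "b > 0"
    and b: "\<And>\<delta>. 0 < \<delta> \<Longrightarrow> \<delta> < b \<Longrightarrow> \<forall>x\<in>K. (\<forall>y\<in>K. x \<noteq> y \<longrightarrow> 2 * \<delta> < \<bar>y - x\<bar>)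
      \<and> poly p (x - \<delta>) * poly p (x + \<delta>) < 0 \<and> (\<forall>z\<in>{x - \<delta>..x + \<delta>}. poly (pderiv p) z \<noteq> 0)"
    unfolding eventually_at_right_field by auto
  then have "\<forall>x\<in>K. (\<forall>y\<in>K. x \<noteq> y \<longrightarrow> 2 * (b / 2) < \<bar>y - x\<bar>)
      \<and> poly p (x - b / 2) * poly p (x + b / 2) < 0 \<and> (\<forall>z\<in>{x - b / 2..x + b / 2}. poly (pderiv p) z \<noteq> 0)"
    using b[of "b / 2"] \<open>b > 0\<close> by simp
  then show ?thesis
    by (intro that[of "b / 2"]) (use \<open>b > 0\<close> in \<open>auto simp: K_def\<close>)
qed

lemma card_eq_if_one_in_each_part:
  assumes "finite K" and "S \<subseteq> (\<Union>k\<in>K. I k)"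
    and "\<And>k l. k \<in> K \<Longrightarrow> l \<in> K \<Longrightarrow> k \<noteq> l \<Longrightarrow> I k \<inter> I l = {}"
    and "\<And>k. k \<in> K \<Longrightarrow> \<exists>!x. x \<in> S \<inter> I k"
  shows "card S = card K"
proof -
  have one: "card (S \<inter> I k) = 1" if k: "k \<in> K" for k
  proof -
    obtain x where "x \<in> S \<inter> I k" and "\<And>y. y \<in> S \<inter> I k \<Longrightarrow> y = x"
      using assms(4)[OF k] by blast
    then have "S \<inter> I k = {x}" by blast
    then show ?thesis by simp
  qed
  have "S = (\<Union>k\<in>K. S \<inter> I k)" using assms(2) by blast
  also have "card \<dots> = (\<Sum>k\<in>K. card (S \<inter> I k))"
  proof (rule card_UN_disjoint[OF assms(1)])
    show "\<forall>k\<in>K. finite (S \<inter> I k)" using one by (auto intro: card_ge_0_finite)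
    show "\<forall>k\<in>K. \<forall>l\<in>K. k \<noteq> l \<longrightarrow> S \<inter> I k \<inter> (S \<inter> I l) = {}" using assms(3) by blast
  qed
  also have "\<dots> = card K" using one by simp
  finally show ?thesis .
qed

text \<open>Each simple root of \<open>F \<xi>\<^sub>0\<close> sits in an interval \<open>I x\<close> at whose endpoints \<open>F \<xi>\<^sub>0\<close>
  changes sign and on which \<open>F' \<xi>\<^sub>0\<close> does not vanish. For \<open>\<xi>\<close> near \<open>\<xi>\<^sub>0\<close> these signs persist,
  giving exactly one root of \<open>F \<xi>\<close> per interval, and \<open>F \<xi>\<close> keeps the sign of \<open>F \<xi>\<^sub>0\<close> on the
  compact set \<open>gaps\<close> left over, so it has no further roots there; beyond \<open>gaps\<close> there are none
  because the leading term \<open>x^n\<close> dominates.\<close>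

lemma card_roots_monic_pencil_locally_const:
  fixes g :: "real poly"
  assumes "degree g < n"
    and simple: "\<And>x. poly (monom 1 n + smult \<xi>\<^sub>0 g) x = 0
      \<Longrightarrow> poly (pderiv (monom 1 n + smult \<xi>\<^sub>0 g)) x \<noteq> 0"
  shows "\<forall>\<^sub>F \<xi> in nhds \<xi>\<^sub>0. card {x. poly (monom 1 n + smult \<xi> g) x = 0}
    = card {x. poly (monom 1 n + smult \<xi>\<^sub>0 g) x = 0}"
proof -
  define F where "F \<xi> = monom 1 n + smult \<xi> g" for \<xi>
  define K where "K = {x. poly (F \<xi>\<^sub>0) x = 0}"
  have "coeff (F \<xi>\<^sub>0) n = 1" using assms(1) by (simp add: F_def coeff_eq_0)
  then have "F \<xi>\<^sub>0 \<noteq> 0" by auto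
  then have "finite K" unfolding K_def by (rule poly_roots_finite)
  obtain R where R: "\<And>\<xi> x. \<bar>\<xi>\<bar> \<le> \<bar>\<xi>\<^sub>0\<bar> + 1 \<Longrightarrow> R \<le> \<bar>x\<bar> \<Longrightarrow> poly (F \<xi>) x \<noteq> 0"
    using monic_pencil_roots_bounded[OF assms(1), of "\<bar>\<xi>\<^sub>0\<bar> + 1", folded F_def] by blast
  have K_iff: "x \<in> K \<longleftrightarrow> poly (F \<xi>\<^sub>0) x = 0" for x unfolding K_def by simp
  obtain \<delta> where "\<delta> > 0"
    and sep: "\<And>x y. x \<in> K \<Longrightarrow> y \<in> K \<Longrightarrow> x \<noteq> y \<Longrightarrow> 2 * \<delta> < \<bar>y - x\<bar>"
    and sign_change: "\<And>x. x \<in> K \<Longrightarrow> poly (F \<xi>\<^sub>0) (x - \<delta>) * poly (F \<xi>\<^sub>0) (x + \<delta>) < 0"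
    and pderiv_nonzero: "\<And>x z. x \<in> K \<Longrightarrow> z \<in> {x - \<delta>..x + \<delta>} \<Longrightarrow> poly (pderiv (F \<xi>\<^sub>0)) z \<noteq> 0"
    using simple_roots_isolating_radius[OF \<open>F \<xi>\<^sub>0 \<noteq> 0\<close> simple[folded F_def], folded K_iff] by blast
  define I where "I x = {x - \<delta><..<x + \<delta>}" for x
  define gaps where "gaps = {-R - \<delta>..R + \<delta>} - (\<Union>x\<in>K. I x)"
  define U where "U = (\<Union>x\<in>K. {x - \<delta>..x + \<delta>})"
  have K_bounded: "\<bar>x\<bar> < R" if "x \<in> K" for x
  proof (rule ccontr)
    assume "\<not> \<bar>x\<bar> < R"
    then show False using R[of \<xi>\<^sub>0 x] that unfolding K_iff by simp
  qed
  have endpoints_outside: "x - \<delta> \<notin> I y \<and> x + \<delta> \<notin> I y" if "x \<in> K" "y \<in> K" for x y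
    using sep[OF that] \<open>\<delta> > 0\<close> unfolding I_def by (cases "x = y") auto
  have endpoints: "x - \<delta> \<in> gaps" "x + \<delta> \<in> gaps" if "x \<in> K" for x
    using K_bounded[OF that] endpoints_outside[OF that] \<open>\<delta> > 0\<close> unfolding gaps_def by auto
  have gaps_nonzero: "\<forall>x\<in>gaps. poly (F \<xi>\<^sub>0) x \<noteq> 0"
  proof (intro ballI notI)
    fix x assume "x \<in> gaps" and "poly (F \<xi>\<^sub>0) x = 0"
    then have "x \<in> K" "x \<in> I x" using \<open>\<delta> > 0\<close> unfolding K_def I_def by auto
    with \<open>x \<in> gaps\<close> show False unfolding gaps_def by blast
  qed
  have "compact gaps"
    unfolding gaps_def I_def by (intro compact_diff compact_Icc open_UN ballI open_greaterThanLessThan)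
  then have ev_gaps: "\<forall>\<^sub>F \<xi> in nhds \<xi>\<^sub>0. \<forall>x\<in>gaps. sgn (poly (F \<xi>) x) = sgn (poly (F \<xi>\<^sub>0) x)"
    using gaps_nonzero unfolding F_def by (rule eventually_sgn_poly_pencil_eq)
  have "compact U" unfolding U_def using \<open>finite K\<close> by (intro compact_UN) auto
  moreover have "\<forall>x\<in>U. poly (pderiv (F \<xi>\<^sub>0)) x \<noteq> 0" unfolding U_def using pderiv_nonzero by blast
  ultimately have ev_U: "\<forall>\<^sub>F \<xi> in nhds \<xi>\<^sub>0. \<forall>x\<in>U.
      sgn (poly (pderiv (F \<xi>)) x) = sgn (poly (pderiv (F \<xi>\<^sub>0)) x)"
    unfolding F_def pderiv_add pderiv_smult by (rule eventually_sgn_poly_pencil_eq)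
  have ev_near: "\<forall>\<^sub>F \<xi> in nhds \<xi>\<^sub>0. \<bar>\<xi>\<bar> \<le> \<bar>\<xi>\<^sub>0\<bar> + 1"
    unfolding eventually_nhds_metric by (auto intro!: exI[of _ 1] simp: dist_real_def)
  have "\<forall>\<^sub>F \<xi> in nhds \<xi>\<^sub>0. card {x. poly (F \<xi>) x = 0} = card K"
    using ev_near ev_gaps ev_U
  proof eventually_elim
    case (elim \<xi>)
    show "card {x. poly (F \<xi>) x = 0} = card K"
    proof (rule card_eq_if_one_in_each_part[where I = I])
      show "{x. poly (F \<xi>) x = 0} \<subseteq> (\<Union>x\<in>K. I x)"
      proof
        fix x assume "x \<in> {x. poly (F \<xi>) x = 0}"
        then have root: "poly (F \<xi>) x = 0" by simp
        then have "\<not> R \<le> \<bar>x\<bar>" using R[of \<xi> x] elim(1) by blast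
        then have "\<bar>x\<bar> < R" by simp
        show "x \<in> (\<Union>x\<in>K. I x)"
        proof (rule ccontr)
          assume "x \<notin> (\<Union>x\<in>K. I x)"
          then have "x \<in> gaps" using \<open>\<bar>x\<bar> < R\<close> \<open>\<delta> > 0\<close> unfolding gaps_def by auto
          then show False using elim(2) gaps_nonzero root by (auto simp: sgn_0_0)
        qed
      qed
      show "I x \<inter> I y = {}" if "x \<in> K" "y \<in> K" "x \<noteq> y" for x y
        using sep[OF that] unfolding I_def by auto
      show "\<exists>!z. z \<in> {x. poly (F \<xi>) x = 0} \<inter> I x" if "x \<in> K" for x
      proof -
        have "sgn (poly (F \<xi>) (x - \<delta>) * poly (F \<xi>) (x + \<delta>))
            = sgn (poly (F \<xi>\<^sub>0) (x - \<delta>) * poly (F \<xi>\<^sub>0) (x + \<delta>))"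
          using elim(2) endpoints[OF that] by (simp add: sgn_mult)
        then have "sgn (poly (F \<xi>) (x - \<delta>) * poly (F \<xi>) (x + \<delta>)) < 0"
          using sign_change[OF that] by simp
        then have "poly (F \<xi>) (x - \<delta>) * poly (F \<xi>) (x + \<delta>) < 0" by simp
        moreover have "\<forall>z\<in>{x - \<delta>..x + \<delta>}. poly (pderiv (F \<xi>)) z \<noteq> 0"
        proof
          fix z assume "z \<in> {x - \<delta>..x + \<delta>}"
          then have "z \<in> U" using that unfolding U_def by blast
          then show "poly (pderiv (F \<xi>)) z \<noteq> 0"
            using elim(3) pderiv_nonzero[OF that \<open>z \<in> {x - \<delta>..x + \<delta>}\<close>]
            by (auto simp: sgn_0_0)
        qed
        ultimately show ?thesis
          using poly_ex1_root_between[of "x - \<delta>" "x + \<delta>" "F \<xi>"] \<open>\<delta> > 0\<close>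
          unfolding I_def Int_iff mem_Collect_eq by simp
      qed
    qed fact
  qed
  then show ?thesis unfolding F_def K_def .
qed

lemma f_v_at_eq: "f_v_at n s v \<xi> = monom 1 n + smult \<xi> (\<Sum>k\<le>s. monom (v k) k)"
  unfolding f_v_at_def f_v_def
  by (rule poly_eqI) (simp add: coeff_map_poly coeff_sum poly_sum coeff_monom)

lemma degree_sum_monom_less:
  assumes "s < n"
  shows "degree (\<Sum>k\<le>s. monom (c k) k :: 'a::comm_semiring_1 poly) < n"
  by (rule le_less_trans[OF degree_sum_le assms]) (auto intro: order.trans[OF degree_monom_le])

lemma poly_P_v:
  "poly (P_v n s v) \<xi> = det (bezout_mat n (f_v_at n s v \<xi>) (pderiv (f_v_at n s v \<xi>)))"
proof -
  have "det (bezout_mat n (f_v_at n s v \<xi>) (pderiv (f_v_at n s v \<xi>)))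
      = det (map_mat (\<lambda>p. poly p \<xi>) (bezout_mat n (f_v n s v) (pderiv (f_v n s v))))"
    unfolding map_mat_bezout_mat[OF poly_hom.comm_ring_hom_axioms] f_v_at_def
      poly_hom.map_poly_pderiv ..
  also have "\<dots> = poly (P_v n s v) \<xi>"
    unfolding P_v_def by (rule comm_ring_hom.hom_det[OF poly_hom.comm_ring_hom_axioms])
  finally show ?thesis ..
qed

lemma poly_P_v_eq_0_if_multiple_root:
  assumes "s < n" and "poly (f_v_at n s v \<xi>) r = 0" and "poly (pderiv (f_v_at n s v \<xi>)) r = 0"
  shows "poly (P_v n s v) \<xi> = 0"
proof -
  have "degree (f_v_at n s v \<xi>) \<le> n"
    unfolding f_v_at_eq using degree_sum_monom_less[OF assms(1), of v]
    by (intro degree_add_le order.trans[OF degree_monom_le] order.trans[OF degree_smult_le]) auto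
  moreover then have "degree (pderiv (f_v_at n s v \<xi>)) \<le> n"
    using degree_pderiv[of "f_v_at n s v \<xi>"] by linarith
  ultimately show ?thesis
    unfolding poly_P_v using assms by (intro det_bezout_mat_common_root) auto
qed

lemma num_real_roots_f_v_at_locally_const:
  assumes "s < n" and "P_v n s v \<noteq> 0" and "alpha_v n s v < \<xi>\<^sub>0"
  shows "\<forall>\<^sub>F \<xi> in nhds \<xi>\<^sub>0. num_real_roots (f_v_at n s v \<xi>) = num_real_roots (f_v_at n s v \<xi>\<^sub>0)"
proof -
  have simple: "poly (pderiv (f_v_at n s v \<xi>\<^sub>0)) x \<noteq> 0" if "poly (f_v_at n s v \<xi>\<^sub>0) x = 0" for x
  proof
    assume "poly (pderiv (f_v_at n s v \<xi>\<^sub>0)) x = 0"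
    then have "poly (P_v n s v) \<xi>\<^sub>0 = 0"
      using poly_P_v_eq_0_if_multiple_root[OF assms(1) that] by blast
    then have "\<xi>\<^sub>0 \<le> alpha_v n s v"
      unfolding alpha_v_def using poly_roots_finite[OF assms(2)] by (intro Max_ge) auto
    then show False using assms(3) by simp
  qed
  show ?thesis
    using card_roots_monic_pencil_locally_const[OF degree_sum_monom_less[OF assms(1)]] simple
    unfolding num_real_roots_def f_v_at_eq by blast
qed

theorem lemma5p5:
  fixes n s :: nat and v :: "nat \<Rightarrow> real" and \<gamma>\<^sub>0 :: int and \<rho>\<^sub>0 :: real
  assumes "1 \<le> s" and "s < n"
    and "P_v n s v \<noteq> 0"
    and "\<rho>\<^sub>0 > alpha_v n s v"
    and "\<forall>\<xi>. \<xi> > \<rho>\<^sub>0 \<longrightarrow> int (num_real_roots (f_v_at n s v \<xi>)) = \<gamma>\<^sub>0"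
  shows "\<forall>\<xi>. \<xi> > alpha_v n s v \<longrightarrow> int (num_real_roots (f_v_at n s v \<xi>)) = \<gamma>\<^sub>0"
proof (intro allI impI)
  fix \<xi> assume "\<xi> > alpha_v n s v"
  define N where "N \<xi> = num_real_roots (f_v_at n s v \<xi>)" for \<xi>
  have "N \<xi> = N (max \<xi> \<rho>\<^sub>0 + 1)"
  proof (rule connected_local_const[where A = "{alpha_v n s v<..}"])
    show "\<forall>a\<in>{alpha_v n s v<..}. \<forall>\<^sub>F b in at a within {alpha_v n s v<..}. N a = N b"
    proof
      fix a assume "a \<in> {alpha_v n s v<..}"
      then have "\<forall>\<^sub>F b in nhds a. N b = N a"
        using num_real_roots_f_v_at_locally_const[OF assms(2,3)] unfolding N_def by simp
      then show "\<forall>\<^sub>F b in at a within {alpha_v n s v<..}. N a = N b"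
        unfolding eventually_at_filter by (rule eventually_mono) simp
    qed
  qed (use \<open>\<xi> > alpha_v n s v\<close> assms(4) in auto)
  then show "int (num_real_roots (f_v_at n s v \<xi>)) = \<gamma>\<^sub>0"
    using assms(5) unfolding N_def by simp
qed

end
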